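(* Let $\ell \to r~[\phi]$ be a constrained rewrite rule. Let $p_1,\ldots,p_n$ be the positions such that $\{p_1,\ldots,p_n\} = \{ p \in \mathcal{P}os(\ell) \mid \ell|_p \in \mathrm{Val} \cup \mathcal{V}ar(\phi) \}$, and let $x_1,\ldots,x_n$ be pairwise distinct variables with $\{x_1,\ldots,x_n\} \cap \mathcal{V}ar(\ell,r,\phi) = \emptyset$. Let $\ell' \to r~[\phi']$ be the constrained rule with $\ell' = \ell[x_1,\ldots,x_n]_{p_1,\ldots,p_n}$ (i.e., $\ell|_{p_i}$ replaced by $x_i$ for each $i$) and $\phi' = \phi \land \bigwedge_{i=1}^n (x_i = \ell|_{p_i}) \land \bigwedge_{y \in \mathcal{V}ar(r)\setminus\mathcal{V}ar(\ell,\phi)} (y = y)$. Then ${\to_{\ell \to r~[\phi]}} = {\to_{\ell' \to r~[\phi']}}$.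
   Context: Logically constrained term rewriting (LCTRS) setting. Sorts $\mathcal{S} = \mathcal{S}_{\mathit{theory}} \uplus \mathcal{S}_{\mathit{term}}$; signature $\Sigma = \Sigma_{\mathit{theory}} \cup \Sigma_{\mathit{terms}}$, where every symbol of $\Sigma_{\mathit{theory}}$ has argument and result sorts in $\mathcal{S}_{\mathit{theory}}$. Each theory sort $\iota$ has a nonempty universe $\mathcal{I}(\iota)$, and an interpretation $\mathcal{J}$ assigns to each $f:\iota_1\times\cdots\times\iota_n\to\iota$ in $\Sigma_{\mathit{theory}}$ a function $\mathcal{I}(\iota_1)\times\cdots\times\mathcal{I}(\iota_n)\to\mathcal{I}(\iota)$. For each theory sort $\iota$ there is a set $\mathrm{Val}_\iota\subseteq\Sigma_{\mathit{theory}}$ of value constants on which $\mathcal{J}$ is a bijection onto $\mathcal{I}(\iota)$; $\mathrm{Val}=\bigcup_\iota \mathrm{Val}_\iota$, and $\Sigma_{\mathit{terms}}\cap\Sigma_{\mathit{theory}}\subseteq\mathrm{Val}$. The theory includes sort $\mathsf{bool}$ with values $\mathsf{true},\mathsf{false}$, the usual connectives and $=,\neq$ on each theory sort, interpreted as expected. Theory terms are elements of $T(\Sigma_{\mathit{theory}},\mathcal{V})$; constraints are theory terms of sort $\mathsf{bool}$; $[\![\cdot]\!]$ denotes evaluation of ground theory terms. A substitution $\gamma$ respects a constraint $\phi$ if $x\gamma\in\mathrm{Val}$ for all $x\in\mathcal{V}ar(\phi)$ and $[\![\phi\gamma]\!]=\mathsf{true}$. A constrained rewrite rule $\ell\to r~[\varphi]$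 consists of terms $\ell,r$ of the same sort and a constraint $\varphi$, where $\ell$ is neither a theory term nor a variable. Its logical variables are $\mathcal{LV}ar(\ell\to r~[\varphi]) = \mathcal{V}ar(\varphi)\cup(\mathcal{V}ar(r)\setminus\mathcal{V}ar(\ell))$; a substitution $\gamma$ respects the rule if $x\gamma\in\mathrm{Val}$ for every logical variable $x$ and $[\![\varphi\gamma]\!]=\mathsf{true}$. For a single rule $\rho = \ell\to r~[\varphi]$, $s \to_{\rho} t$ holds iff there are a position $p$ of $s$ and a substitution $\gamma$ respecting $\rho$ with $s|_p=\ell\gamma$ and $t=s[r\gamma]_p$. *)

theory Defs
  imports Main
begin

datatype ('f, 'v) trm = Var 'v | Fun 'f "('f, 'v) trm list"

fun vars :: "('f, 'v) trm \<Rightarrow> 'v set" where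
  "vars (Var x) = {x}"
| "vars (Fun f ts) = (\<Union>t \<in> set ts. vars t)"

fun funs :: "('f, 'v) trm \<Rightarrow> 'f set" where
  "funs (Var x) = {}"
| "funs (Fun f ts) = insert f (\<Union>t \<in> set ts. funs t)"

type_synonym pos = "nat list"

function poss :: "('f, 'v) trm \<Rightarrow> pos set" where
  "poss (Var x) = {[]}"
| "poss (Fun f ts) = insert [] (\<Union>(i, t) \<in> set (zip [0..<length ts] ts). (\<lambda>p. i # p) ` poss t)"
  by pat_completeness auto
termination
  by (relation "measure size") (auto dest!: set_zip_rightD simp: less_Suc_eq_le intro!: size_list_estimation')

text \<open>Subterm at a position (meaningful for positions in poss).\<close>
fun subt_at :: "('f, 'v) trm \<Rightarrow> pos \<Rightarrow> ('f, 'v) trm" where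
  "subt_at t [] = t"
| "subt_at (Var x) (i # p) = Var x"
| "subt_at (Fun f ts) (i # p) = (if i < length ts then subt_at (ts ! i) p else Fun f ts)"

fun replace_at :: "('f, 'v) trm \<Rightarrow> pos \<Rightarrow> ('f, 'v) trm \<Rightarrow> ('f, 'v) trm" where
  "replace_at t [] u = u"
| "replace_at (Var x) (i # p) u = Var x"
| "replace_at (Fun f ts) (i # p) u =
     (if i < length ts then Fun f (ts[i := replace_at (ts ! i) p u]) else Fun f ts)"

fun replace_vars :: "('f, 'v) trm \<Rightarrow> pos list \<Rightarrow> 'v list \<Rightarrow> ('f, 'v) trm" where
  "replace_vars t (p # ps) (x # xs) = replace_vars (replace_at t p (Var x)) ps xs"
| "replace_vars t _ _ = t"

fun subst :: "('f, 'v) trm \<Rightarrow> ('v \<Rightarrow> ('f, 'v) trm) \<Rightarrow> ('f, 'v) trm" where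
  "subst (Var x) \<sigma> = \<sigma> x"
| "subst (Fun f ts) \<sigma> = Fun f (map (\<lambda>t. subst t \<sigma>) ts)"

record ('f, 's, 'u) lctrs_sig =
  syms_theory :: "'f set"
  syms_terms :: "'f set"
  sorts_theory :: "'s set"
  sorts_term :: "'s set"
  ftype :: "'f \<Rightarrow> 's list \<times> 's"
  univ :: "'s \<Rightarrow> 'u set"
  interp :: "'f \<Rightarrow> 'u list \<Rightarrow> 'u"
  vals :: "'f set"
  bool_sort :: 's
  tt_sym :: 'f
  ff_sym :: 'f
  and_sym :: 'f
  eq_sym :: "'s \<Rightarrow> 'f"

definition Val_of :: "('f, 's, 'u) lctrs_sig \<Rightarrow> 's \<Rightarrow> 'f set" where
  "Val_of S \<iota> = {c \<in> vals S. ftype S c = ([], \<iota>)}"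

definition true_val :: "('f, 's, 'u) lctrs_sig \<Rightarrow> 'u" where
  "true_val S = interp S (tt_sym S) []"

definition false_val :: "('f, 's, 'u) lctrs_sig \<Rightarrow> 'u" where
  "false_val S = interp S (ff_sym S) []"

inductive has_sort :: "('f, 's, 'u) lctrs_sig \<Rightarrow> ('v \<Rightarrow> 's) \<Rightarrow> ('f, 'v) trm \<Rightarrow> 's \<Rightarrow> bool"
  for S vsort where
  Var: "has_sort S vsort (Var x) (vsort x)"
| Fun: "f \<in> syms_theory S \<union> syms_terms S \<Longrightarrow> ftype S f = (ss, s) \<Longrightarrow>
        list_all2 (has_sort S vsort) ts ss \<Longrightarrow> has_sort S vsort (Fun f ts) s"

definition wf_lctrs :: "('f, 's, 'u) lctrs_sig \<Rightarrow> ('v \<Rightarrow> 's) \<Rightarrow> bool" where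
  "wf_lctrs S vsort \<longleftrightarrow>
     sorts_theory S \<inter> sorts_term S = {} \<and>
     (\<forall>x. vsort x \<in> sorts_theory S \<union> sorts_term S) \<and>
     (\<forall>f \<in> syms_theory S. set (fst (ftype S f)) \<subseteq> sorts_theory S \<and> snd (ftype S f) \<in> sorts_theory S) \<and>
     (\<forall>f \<in> syms_terms S. set (fst (ftype S f)) \<subseteq> sorts_theory S \<union> sorts_term S \<and>
                          snd (ftype S f) \<in> sorts_theory S \<union> sorts_term S) \<and>
     (\<forall>\<iota> \<in> sorts_theory S. univ S \<iota> \<noteq> {}) \<and>
     (\<forall>f \<in> syms_theory S. \<forall>us. list_all2 (\<in>) us (map (univ S) (fst (ftype S f))) \<longrightarrow>
                                   interp S f us \<in> univ S (snd (ftype S f))) \<and>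
     vals S = (\<Union>\<iota> \<in> sorts_theory S. Val_of S \<iota>) \<and>
     vals S \<subseteq> syms_theory S \<and>
     (\<forall>\<iota> \<in> sorts_theory S. bij_betw (\<lambda>c. interp S c []) (Val_of S \<iota>) (univ S \<iota>)) \<and>
     syms_terms S \<inter> syms_theory S \<subseteq> vals S \<and>
     bool_sort S \<in> sorts_theory S \<and>
     Val_of S (bool_sort S) = {tt_sym S, ff_sym S} \<and> tt_sym S \<noteq> ff_sym S \<and>
     and_sym S \<in> syms_theory S \<and>
     ftype S (and_sym S) = ([bool_sort S, bool_sort S], bool_sort S) \<and>
     (\<forall>a \<in> univ S (bool_sort S). \<forall>b \<in> univ S (bool_sort S).
        interp S (and_sym S) [a, b] =
          (if a = true_val S \<and> b = true_val S then true_val S else false_val S)) \<and>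
     (\<forall>\<iota> \<in> sorts_theory S. eq_sym S \<iota> \<in> syms_theory S \<and>
        ftype S (eq_sym S \<iota>) = ([\<iota>, \<iota>], bool_sort S) \<and>
        (\<forall>a \<in> univ S \<iota>. \<forall>b \<in> univ S \<iota>.
           interp S (eq_sym S \<iota>) [a, b] = (if a = b then true_val S else false_val S)))"

definition is_theory_term :: "('f, 's, 'u) lctrs_sig \<Rightarrow> ('f, 'v) trm \<Rightarrow> bool" where
  "is_theory_term S t \<longleftrightarrow> funs t \<subseteq> syms_theory S"

definition is_val :: "('f, 's, 'u) lctrs_sig \<Rightarrow> ('f, 'v) trm \<Rightarrow> bool" where
  "is_val S t \<longleftrightarrow> (\<exists>c. t = Fun c [] \<and> c \<in> vals S)"

fun eval :: "('f, 's, 'u) lctrs_sig \<Rightarrow> ('f, 'v) trm \<Rightarrow> 'u" where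
  "eval S (Var x) = undefined"
| "eval S (Fun f ts) = interp S f (map (eval S) ts)"

definition sort_preserving :: "('f, 's, 'u) lctrs_sig \<Rightarrow> ('v \<Rightarrow> 's) \<Rightarrow> ('v \<Rightarrow> ('f, 'v) trm) \<Rightarrow> bool" where
  "sort_preserving S vsort \<gamma> \<longleftrightarrow> (\<forall>x. has_sort S vsort (\<gamma> x) (vsort x))"

type_synonym ('f, 'v) crule = "('f, 'v) trm \<times> ('f, 'v) trm \<times> ('f, 'v) trm"
  \<comment> \<open>(l, r, phi) stands for l -> r [phi]\<close>

definition wf_rule :: "('f, 's, 'u) lctrs_sig \<Rightarrow> ('v \<Rightarrow> 's) \<Rightarrow> ('f, 'v) crule \<Rightarrow> bool" where
  "wf_rule S vsort \<rho> = (case \<rho> of (l, r, \<phi>) \<Rightarrow>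
     (\<exists>\<sigma>. has_sort S vsort l \<sigma> \<and> has_sort S vsort r \<sigma>) \<and>
     has_sort S vsort \<phi> (bool_sort S) \<and> is_theory_term S \<phi> \<and>
     \<not> is_theory_term S l \<and> (\<forall>x. l \<noteq> Var x))"

definition lvars :: "('f, 'v) crule \<Rightarrow> 'v set" where
  "lvars \<rho> = (case \<rho> of (l, r, \<phi>) \<Rightarrow> vars \<phi> \<union> (vars r - vars l))"

definition respects_rule :: "('f, 's, 'u) lctrs_sig \<Rightarrow> ('v \<Rightarrow> ('f, 'v) trm) \<Rightarrow> ('f, 'v) crule \<Rightarrow> bool" where
  "respects_rule S \<gamma> \<rho> = (case \<rho> of (l, r, \<phi>) \<Rightarrow>
     (\<forall>x \<in> lvars \<rho>. is_val S (\<gamma> x)) \<and> eval S (subst \<phi> \<gamma>) = true_val S)"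

definition rstep :: "('f, 's, 'u) lctrs_sig \<Rightarrow> ('v \<Rightarrow> 's) \<Rightarrow> ('f, 'v) crule \<Rightarrow>
    (('f, 'v) trm \<times> ('f, 'v) trm) set" where
  "rstep S vsort \<rho> = (case \<rho> of (l, r, \<phi>) \<Rightarrow>
     {(s, t). \<exists>p \<gamma>. p \<in> poss s \<and> sort_preserving S vsort \<gamma> \<and> respects_rule S \<gamma> \<rho> \<and>
        subt_at s p = subst l \<gamma> \<and> t = replace_at s p (subst r \<gamma>)})"

definition mk_and :: "('f, 's, 'u) lctrs_sig \<Rightarrow> ('f, 'v) trm \<Rightarrow> ('f, 'v) trm \<Rightarrow> ('f, 'v) trm" where
  "mk_and S a b = Fun (and_sym S) [a, b]"

definition mk_eq :: "('f, 's, 'u) lctrs_sig \<Rightarrow> 's \<Rightarrow> ('f, 'v) trm \<Rightarrow> ('f, 'v) trm \<Rightarrow> ('f, 'v) trm" where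
  "mk_eq S \<iota> a b = Fun (eq_sym S \<iota>) [a, b]"

fun conj_list :: "('f, 's, 'u) lctrs_sig \<Rightarrow> ('f, 'v) trm list \<Rightarrow> ('f, 'v) trm" where
  "conj_list S [] = Fun (tt_sym S) []"
| "conj_list S (a # as) = mk_and S a (conj_list S as)"

end

theory Submission
  imports Defs "HOL-Library.Sublist"
begin

(* The two rules have the same instances. If \<gamma> respects l \<rightarrow> r [\<phi>], extend it by
   x_i \<mapsto> (l|_p_i)\<gamma>: every l|_p_i is a value or a variable of \<phi>, so this is a value, the
   extended substitution satisfies the new equations x_i = l|_p_i, and it instantiates l' to l\<gamma>.
   Conversely, these equations force l'\<gamma> = l\<gamma> for any \<gamma> respecting the new rule. Since l'
   loses only variables of \<phi>, the logical variables of the new rule are those of the old one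
   together with the x_i. Simultaneous replacement is well behaved because the p_i are leaves
   of l and hence pairwise parallel. *)

section \<open>Positions, replacement and substitution\<close>

lemma Cons_in_poss_Fun [simp]:
  "i # p \<in> poss (Fun f ts) \<longleftrightarrow> i < length ts \<and> p \<in> poss (ts ! i)"
  by (force simp: set_zip)

lemma poss_Fun_Nil [simp]: "poss (Fun f []) = {[]}"
  by simp

declare poss.simps(2) [simp del]

lemma poss_append_subt_at: "p @ q \<in> poss t \<Longrightarrow> q \<in> poss (subt_at t p)"
  by (induction t p rule: subt_at.induct) auto

lemma vars_subt_at_subset: "p \<in> poss t \<Longrightarrow> vars (subt_at t p) \<subseteq> vars t"
  by (induction t p rule: subt_at.induct) (auto dest!: nth_mem)

lemma subst_cong: "(\<And>x. x \<in> vars t \<Longrightarrow> \<sigma> x = \<tau> x) \<Longrightarrow> subst t \<sigma> = subst t \<tau>"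
  by (induction t) auto

lemma subst_replace_at_same:
  "p \<in> poss t \<Longrightarrow> subst u \<sigma> = subst (subt_at t p) \<sigma> \<Longrightarrow> subst (replace_at t p u) \<sigma> = subst t \<sigma>"
proof (induction t p u rule: replace_at.induct)
  case (3 f ts i p u)
  then show ?case by (simp add: map_update) (metis length_map list_update_id nth_map)
qed auto

lemma parallel_replace_at:
  "p \<in> poss t \<Longrightarrow> q \<in> poss t \<Longrightarrow> p \<parallel> q \<Longrightarrow>
   q \<in> poss (replace_at t p u) \<and> subt_at (replace_at t p u) q = subt_at t q"
proof (induction t p u arbitrary: q rule: replace_at.induct)
  case (3 f ts i p u)
  then show ?case
    by (cases q) (auto simp: nth_list_update parallel_def)
qed auto

lemma parallel_replace_at_Cons:
  assumes "set (p # ps) \<subseteq> poss t" and "distinct (p # ps)" and "pairwise (\<parallel>) (set (p # ps))"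
    and "q \<in> set ps"
  shows "q \<in> poss (replace_at t p u) \<and> subt_at (replace_at t p u) q = subt_at t q"
proof -
  have "p \<parallel> q" using assms(2-4) by (auto simp: pairwise_def)
  then show ?thesis using assms(1,4) by (intro parallel_replace_at) auto
qed

lemma subst_replace_vars:
  assumes "length xs = length ps" and "distinct ps" and "set ps \<subseteq> poss t" and "pairwise (\<parallel>) (set ps)"
    and "\<And>i. i < length ps \<Longrightarrow> \<sigma> (xs ! i) = subst (subt_at t (ps ! i)) \<sigma>"
  shows "subst (replace_vars t ps xs) \<sigma> = subst t \<sigma>"
  using assms
proof (induction ps arbitrary: xs t)
  case (Cons p ps)
  then obtain x xs' where xs: "xs = x # xs'" by (cases xs) auto
  let ?t' = "replace_at t p (Var x)"
  have "subst (replace_vars ?t' ps xs') \<sigma> = subst ?t' \<sigma>"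
  proof (rule Cons.IH)
    show "\<sigma> (xs' ! i) = subst (subt_at ?t' (ps ! i)) \<sigma>" if "i < length ps" for i
      using that Cons.prems(5)[of "Suc i"] parallel_replace_at_Cons[OF Cons.prems(3,2,4)] xs by simp
  qed (use Cons.prems xs parallel_replace_at_Cons[OF Cons.prems(3,2,4)] in \<open>auto intro: pairwise_subset\<close>)
  also have "\<dots> = subst t \<sigma>"
    using Cons.prems(3) Cons.prems(5)[of 0] xs by (intro subst_replace_at_same) auto
  finally show ?case using xs by simp
qed simp

lemma vars_replace_at:
  "p \<in> poss t \<Longrightarrow> vars t \<subseteq> vars (replace_at t p u) \<union> vars (subt_at t p)"
proof (induction t p u rule: replace_at.induct)
  case (3 f ts i p u)
  then show ?case by (fastforce simp: set_conv_nth nth_list_update)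
qed auto

lemma vars_replace_vars:
  assumes "length xs = length ps" and "distinct ps" and "set ps \<subseteq> poss t" and "pairwise (\<parallel>) (set ps)"
  shows "vars t \<subseteq> vars (replace_vars t ps xs) \<union> (\<Union>p \<in> set ps. vars (subt_at t p))"
  using assms
proof (induction ps arbitrary: xs t)
  case (Cons p ps)
  then obtain x xs' where xs: "xs = x # xs'" by (cases xs) auto
  let ?t' = "replace_at t p (Var x)"
  have "vars ?t' \<subseteq> vars (replace_vars ?t' ps xs') \<union> (\<Union>q \<in> set ps. vars (subt_at ?t' q))"
    using Cons.prems xs parallel_replace_at_Cons[OF Cons.prems(3,2,4)]
    by (intro Cons.IH) (auto intro: pairwise_subset)
  moreover have "vars t \<subseteq> vars ?t' \<union> vars (subt_at t p)"
    using Cons.prems(3) by (intro vars_replace_at) auto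
  ultimately show ?case
    using xs parallel_replace_at_Cons[OF Cons.prems(3,2,4)] by auto
qed simp

lemma pairwise_parallel_leaf_poss:
  assumes "P \<subseteq> poss t" and "\<And>p. p \<in> P \<Longrightarrow> poss (subt_at t p) = {[]}"
  shows "pairwise (\<parallel>) P"
proof (rule pairwiseI)
  have no_strict_prefix: "\<not> strict_prefix p q" if "p \<in> P" "q \<in> P" for p q
  proof
    assume "strict_prefix p q"
    then obtain j r where "q = p @ j # r"
      by (metis append_Nil2 list.exhaust prefix_def strict_prefix_def)
    then show False
      using poss_append_subt_at[of p "j # r" t] assms that by auto
  qed
  fix p q assume "p \<in> P" "q \<in> P" "p \<noteq> q"
  then show "p \<parallel> q"
    using no_strict_prefix by (auto simp: parallel_def strict_prefix_def)
qed

lemma subst_mk_and [simp]: "subst (mk_and S a b) \<sigma> = mk_and S (subst a \<sigma>) (subst b \<sigma>)"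
  by (simp add: mk_and_def)

lemma subst_mk_eq [simp]: "subst (mk_eq S \<iota> a b) \<sigma> = mk_eq S \<iota> (subst a \<sigma>) (subst b \<sigma>)"
  by (simp add: mk_eq_def)

lemma subst_conj_list [simp]: "subst (conj_list S as) \<sigma> = conj_list S (map (\<lambda>a. subst a \<sigma>) as)"
  by (induction as) auto

lemma vars_mk_and [simp]: "vars (mk_and S a b) = vars a \<union> vars b"
  by (simp add: mk_and_def)

lemma vars_mk_eq [simp]: "vars (mk_eq S \<iota> a b) = vars a \<union> vars b"
  by (simp add: mk_eq_def)

lemma vars_conj_list [simp]: "vars (conj_list S as) = (\<Union>a \<in> set as. vars a)"
  by (induction as) auto

section \<open>Evaluation of constraints\<close>

lemma has_sort_subst:
  "has_sort S vsort t s \<Longrightarrow> sort_preserving S vsort \<sigma> \<Longrightarrow> has_sort S vsort (subst t \<sigma>) s"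
proof (induction rule: has_sort.induct)
  case (Var x)
  then show ?case by (simp add: sort_preserving_def)
next
  case (Fun f ss s ts)
  then show ?case by (auto intro!: has_sort.Fun simp: list_all2_conv_all_nth)
qed

inductive_cases has_sort_FunE: "has_sort S vsort (Fun f ts) s"

lemma respects_rule_iff:
  "respects_rule S \<gamma> (l, r, \<phi>) \<longleftrightarrow>
     (\<forall>x \<in> vars \<phi> \<union> (vars r - vars l). is_val S (\<gamma> x)) \<and> eval S (subst \<phi> \<gamma>) = true_val S"
  by (simp add: respects_rule_def lvars_def)

lemma rstep_subsetI:
  assumes "\<And>\<gamma>. sort_preserving S vsort \<gamma> \<Longrightarrow> respects_rule S \<gamma> (l, r, \<phi>) \<Longrightarrow>
      \<exists>\<gamma>'. sort_preserving S vsort \<gamma>' \<and> respects_rule S \<gamma>' (l', r', \<phi>') \<and>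
        subst l' \<gamma>' = subst l \<gamma> \<and> subst r' \<gamma>' = subst r \<gamma>"
  shows "rstep S vsort (l, r, \<phi>) \<subseteq> rstep S vsort (l', r', \<phi>')"
  unfolding rstep_def using assms by fastforce

context
  fixes S :: "('f, 's, 'u) lctrs_sig" and vsort :: "'v \<Rightarrow> 's"
  assumes wf: "wf_lctrs S vsort"
begin

lemma has_sort_is_valD:
  assumes "has_sort S vsort t s" and "is_val S t"
  shows "s \<in> sorts_theory S" and "\<exists>c. t = Fun c [] \<and> c \<in> Val_of S s" and "eval S t \<in> univ S s"
proof -
  obtain c where t: "t = Fun c []" and "c \<in> vals S"
    using assms(2) by (auto simp: is_val_def)
  then obtain \<iota> where \<iota>: "\<iota> \<in> sorts_theory S" "c \<in> Val_of S \<iota>"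
    using wf by (auto simp: wf_lctrs_def)
  moreover have "ftype S c = ([], s)"
    using assms(1) t by (auto elim: has_sort_FunE)
  ultimately have "\<iota> = s" by (simp add: Val_of_def)
  moreover have "bij_betw (\<lambda>c. interp S c []) (Val_of S \<iota>) (univ S \<iota>)"
    using wf \<iota> by (simp add: wf_lctrs_def)
  ultimately show "s \<in> sorts_theory S" "\<exists>c. t = Fun c [] \<and> c \<in> Val_of S s" "eval S t \<in> univ S s"
    using \<iota> t by (auto dest: bij_betw_apply)
qed

lemma eval_subst_in_univ:
  "has_sort S vsort t s \<Longrightarrow> funs t \<subseteq> syms_theory S \<Longrightarrow> sort_preserving S vsort \<sigma> \<Longrightarrow>
   (\<forall>x \<in> vars t. is_val S (\<sigma> x)) \<Longrightarrow> eval S (subst t \<sigma>) \<in> univ S s"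
proof (induction rule: has_sort.induct)
  case (Var x)
  then show ?case using has_sort_is_valD(3)[of "\<sigma> x" "vsort x"] by (simp add: sort_preserving_def)
next
  case (Fun f ss s ts)
  have "list_all2 (\<in>) (map (\<lambda>t. eval S (subst t \<sigma>)) ts) (map (univ S) ss)"
    using Fun by (fastforce simp: list_all2_conv_all_nth)
  then show ?case using Fun wf unfolding wf_lctrs_def by (auto simp: comp_def)
qed

lemma true_val_in_univ: "true_val S \<in> univ S (bool_sort S)"
  and false_val_in_univ: "false_val S \<in> univ S (bool_sort S)"
  and true_val_neq_false_val: "true_val S \<noteq> false_val S"
proof -
  have "bij_betw (\<lambda>c. interp S c []) {tt_sym S, ff_sym S} (univ S (bool_sort S))"
    and "tt_sym S \<noteq> ff_sym S"
    using wf by (auto simp: wf_lctrs_def)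
  then show "true_val S \<in> univ S (bool_sort S)" "false_val S \<in> univ S (bool_sort S)"
    "true_val S \<noteq> false_val S"
    by (auto simp: true_val_def false_val_def bij_betw_def inj_on_def)
qed

lemma eval_mk_eq:
  assumes "has_sort S vsort a \<iota>" "has_sort S vsort b \<iota>" "is_val S a" "is_val S b"
  shows "eval S (mk_eq S \<iota> a b) \<in> univ S (bool_sort S)"
    and "eval S (mk_eq S \<iota> a b) = true_val S \<longleftrightarrow> a = b"
proof -
  obtain c d where \<iota>: "\<iota> \<in> sorts_theory S" and a: "a = Fun c []" "c \<in> Val_of S \<iota>"
    and b: "b = Fun d []" "d \<in> Val_of S \<iota>"
    using has_sort_is_valD(1,2) assms by meson
  have "eval S a \<in> univ S \<iota>" "eval S b \<in> univ S \<iota>"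
    using has_sort_is_valD(3) assms by auto
  then have "eval S (mk_eq S \<iota> a b) = (if eval S a = eval S b then true_val S else false_val S)"
    using wf \<iota> unfolding wf_lctrs_def mk_eq_def eval.simps list.map by blast
  moreover have "bij_betw (\<lambda>c. interp S c []) (Val_of S \<iota>) (univ S \<iota>)"
    using wf \<iota> unfolding wf_lctrs_def by blast
  then have "eval S a = eval S b \<longleftrightarrow> a = b"
    using a b by (auto simp: bij_betw_def inj_on_def)
  ultimately show "eval S (mk_eq S \<iota> a b) \<in> univ S (bool_sort S)"
    and "eval S (mk_eq S \<iota> a b) = true_val S \<longleftrightarrow> a = b"
    using true_val_in_univ false_val_in_univ true_val_neq_false_val by auto
qed

(* wf_lctrs fixes the conjunction only on booleans, hence the universe bookkeeping. *)
lemma eval_mk_and: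
  assumes "eval S a \<in> univ S (bool_sort S)" "eval S b \<in> univ S (bool_sort S)"
  shows "eval S (mk_and S a b) \<in> univ S (bool_sort S)"
    and "eval S (mk_and S a b) = true_val S \<longleftrightarrow> eval S a = true_val S \<and> eval S b = true_val S"
proof -
  have "eval S (mk_and S a b) =
      (if eval S a = true_val S \<and> eval S b = true_val S then true_val S else false_val S)"
    using wf assms unfolding wf_lctrs_def mk_and_def by simp
  then show "eval S (mk_and S a b) \<in> univ S (bool_sort S)"
    and "eval S (mk_and S a b) = true_val S \<longleftrightarrow> eval S a = true_val S \<and> eval S b = true_val S"
    using true_val_in_univ false_val_in_univ true_val_neq_false_val by auto
qed

lemma eval_conj_list_map:
  assumes "\<And>a. a \<in> set as \<Longrightarrow> eval S (f a) \<in> univ S (bool_sort S)"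
  shows "eval S (conj_list S (map f as)) \<in> univ S (bool_sort S)"
    and "eval S (conj_list S (map f as)) = true_val S \<longleftrightarrow> (\<forall>a \<in> set as. eval S (f a) = true_val S)"
  using assms
  by (induction as) (simp_all add: eval_mk_and true_val_in_univ flip: true_val_def)

end

section \<open>Abstracting values and constrained variables out of a left-hand side\<close>

locale value_abstraction =
  fixes S :: "('f, 's, 'u) lctrs_sig" and vsort :: "'v \<Rightarrow> 's"
    and l r \<phi> :: "('f, 'v) trm" and ps :: "pos list" and xs ys :: "'v list"
  assumes wf_lctrs: "wf_lctrs S vsort"
    and has_sort_\<phi>: "has_sort S vsort \<phi> (bool_sort S)"
    and theory_term_\<phi>: "is_theory_term S \<phi>"
    and distinct_ps: "distinct ps"
    and set_ps: "set ps \<subseteq> {p \<in> poss l. is_val S (subt_at l p) \<or> (\<exists>x \<in> vars \<phi>. subt_at l p = Var x)}"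
    and length_xs: "length xs = length ps"
    and distinct_xs: "distinct xs"
    and fresh_xs: "set xs \<inter> (vars l \<union> vars r \<union> vars \<phi>) = {}"
    and has_sort_xs: "\<forall>i < length ps. has_sort S vsort (subt_at l (ps ! i)) (vsort (xs ! i))"
    and set_ys: "set ys = vars r - (vars l \<union> vars \<phi>)"
begin

definition l' :: "('f, 'v) trm" where
  "l' = replace_vars l ps xs"

definition abstraction_eqs :: "('f, 'v) trm" where
  "abstraction_eqs =
     conj_list S (map (\<lambda>i. mk_eq S (vsort (xs ! i)) (Var (xs ! i)) (subt_at l (ps ! i))) [0..<length ps])"

definition trivial_eqs :: "('f, 'v) trm" where
  "trivial_eqs = conj_list S (map (\<lambda>y. mk_eq S (vsort y) (Var y) (Var y)) ys)"

definition \<phi>' :: "('f, 'v) trm" where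
  "\<phi>' = mk_and S \<phi> (mk_and S abstraction_eqs trivial_eqs)"

lemma ps_in_poss: "set ps \<subseteq> poss l"
  using set_ps by blast

lemma vars_subt_at_ps: "p \<in> set ps \<Longrightarrow> vars (subt_at l p) \<subseteq> vars \<phi>"
  using set_ps by (auto simp: is_val_def)

lemma is_val_subst_subt_at_ps:
  "p \<in> set ps \<Longrightarrow> \<forall>x \<in> vars \<phi>. is_val S (\<sigma> x) \<Longrightarrow> is_val S (subst (subt_at l p) \<sigma>)"
  using set_ps by (auto simp: is_val_def)

lemma pairwise_parallel_ps: "pairwise (\<parallel>) (set ps)"
  by (rule pairwise_parallel_leaf_poss[OF ps_in_poss]) (use set_ps in \<open>auto simp: is_val_def\<close>)

lemma subst_l':
  "(\<And>i. i < length ps \<Longrightarrow> \<sigma> (xs ! i) = subst (subt_at l (ps ! i)) \<sigma>) \<Longrightarrow> subst l' \<sigma> = subst l \<sigma>"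
  unfolding l'_def
  by (rule subst_replace_vars[OF length_xs distinct_ps ps_in_poss pairwise_parallel_ps])

lemma vars_l_subset: "vars l \<subseteq> vars l' \<union> vars \<phi>"
  using vars_replace_vars[OF length_xs distinct_ps ps_in_poss pairwise_parallel_ps] vars_subt_at_ps
  unfolding l'_def by blast

lemma vars_\<phi>': "vars \<phi>' = vars \<phi> \<union> set xs \<union> set ys"
proof -
  have eqs: "vars abstraction_eqs = (\<Union>i < length ps. insert (xs ! i) (vars (subt_at l (ps ! i))))"
    by (auto simp: abstraction_eqs_def atLeast0LessThan)
  have "set xs \<subseteq> vars abstraction_eqs"
    unfolding eqs using length_xs by (auto simp: in_set_conv_nth)
  moreover have "vars abstraction_eqs \<subseteq> set xs \<union> vars \<phi>"
    unfolding eqs using length_xs vars_subt_at_ps by (fastforce dest: nth_mem)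
  ultimately show ?thesis
    by (auto simp: \<phi>'_def trivial_eqs_def)
qed

lemma eval_subst_\<phi>':
  assumes sorted: "sort_preserving S vsort \<sigma>" and vals: "\<forall>x \<in> vars \<phi>'. is_val S (\<sigma> x)"
  shows "eval S (subst \<phi>' \<sigma>) = true_val S \<longleftrightarrow>
    eval S (subst \<phi> \<sigma>) = true_val S \<and> (\<forall>i < length ps. \<sigma> (xs ! i) = subst (subt_at l (ps ! i)) \<sigma>)"
proof -
  have vals_\<phi>: "\<forall>x \<in> vars \<phi>. is_val S (\<sigma> x)"
    using vals vars_\<phi>' by blast
  have \<phi>: "eval S (subst \<phi> \<sigma>) \<in> univ S (bool_sort S)"
    using has_sort_\<phi> theory_term_\<phi> sorted vals_\<phi>
    by (intro eval_subst_in_univ[OF wf_lctrs]) (auto simp: is_theory_term_def)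
  define eq where "eq i = mk_eq S (vsort (xs ! i)) (\<sigma> (xs ! i)) (subst (subt_at l (ps ! i)) \<sigma>)" for i
  define refl where "refl y = mk_eq S (vsort y) (\<sigma> y) (\<sigma> y)" for y
  have eq: "eval S (eq i) \<in> univ S (bool_sort S)"
    "eval S (eq i) = true_val S \<longleftrightarrow> \<sigma> (xs ! i) = subst (subt_at l (ps ! i)) \<sigma>"
    if i: "i \<in> set [0..<length ps]" for i
  proof -
    have "has_sort S vsort (\<sigma> (xs ! i)) (vsort (xs ! i))"
      using sorted by (simp add: sort_preserving_def)
    moreover have "has_sort S vsort (subst (subt_at l (ps ! i)) \<sigma>) (vsort (xs ! i))"
      using has_sort_xs i sorted by (simp add: has_sort_subst)
    moreover have "is_val S (\<sigma> (xs ! i))"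
      using vals vars_\<phi>' i length_xs by simp
    moreover have "is_val S (subst (subt_at l (ps ! i)) \<sigma>)"
      using i vals_\<phi> by (simp add: is_val_subst_subt_at_ps)
    ultimately show "eval S (eq i) \<in> univ S (bool_sort S)"
      "eval S (eq i) = true_val S \<longleftrightarrow> \<sigma> (xs ! i) = subst (subt_at l (ps ! i)) \<sigma>"
      unfolding eq_def by (simp_all add: eval_mk_eq[OF wf_lctrs])
  qed
  have refl: "eval S (refl y) \<in> univ S (bool_sort S)" "eval S (refl y) = true_val S"
    if "y \<in> set ys" for y
    using that sorted vals vars_\<phi>' eval_mk_eq[OF wf_lctrs, of "\<sigma> y" "vsort y" "\<sigma> y"]
    by (auto simp: refl_def sort_preserving_def)
  have "subst abstraction_eqs \<sigma> = conj_list S (map eq [0..<length ps])"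
    and "subst trivial_eqs \<sigma> = conj_list S (map refl ys)"
    by (simp_all add: abstraction_eqs_def trivial_eqs_def eq_def[abs_def] refl_def[abs_def] comp_def)
  then have "eval S (subst abstraction_eqs \<sigma>) \<in> univ S (bool_sort S)"
    "eval S (subst abstraction_eqs \<sigma>) = true_val S \<longleftrightarrow>
      (\<forall>i < length ps. \<sigma> (xs ! i) = subst (subt_at l (ps ! i)) \<sigma>)"
    "eval S (subst trivial_eqs \<sigma>) \<in> univ S (bool_sort S)"
    "eval S (subst trivial_eqs \<sigma>) = true_val S"
    using eval_conj_list_map[OF wf_lctrs, where as = "[0..<length ps]" and f = eq, OF eq(1)]
      eval_conj_list_map[OF wf_lctrs, where as = ys and f = refl, OF refl(1)] eq(2) refl(2)
    by auto
  then show ?thesis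
    using \<phi> by (simp add: \<phi>'_def eval_mk_and[OF wf_lctrs])
qed

definition extend_subst :: "('v \<Rightarrow> ('f, 'v) trm) \<Rightarrow> 'v \<Rightarrow> ('f, 'v) trm" where
  "extend_subst \<gamma> x =
     (case map_of (zip xs ps) x of Some p \<Rightarrow> subst (subt_at l p) \<gamma> | None \<Rightarrow> \<gamma> x)"

lemma extend_subst_nth: "i < length ps \<Longrightarrow> extend_subst \<gamma> (xs ! i) = subst (subt_at l (ps ! i)) \<gamma>"
  using map_of_zip_nth[OF length_xs distinct_xs] by (simp add: extend_subst_def)

lemma extend_subst_fresh:
  assumes "x \<notin> set xs"
  shows "extend_subst \<gamma> x = \<gamma> x"
proof -
  have "map_of (zip xs ps) x = None"
    using assms length_xs by simp
  then show ?thesis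
    by (simp add: extend_subst_def)
qed

lemma subst_extend_subst:
  "vars t \<subseteq> vars l \<union> vars r \<union> vars \<phi> \<Longrightarrow> subst t (extend_subst \<gamma>) = subst t \<gamma>"
  by (intro subst_cong extend_subst_fresh) (use fresh_xs in blast)

lemma extend_subst_solves_eqs:
  "i < length ps \<Longrightarrow> extend_subst \<gamma> (xs ! i) = subst (subt_at l (ps ! i)) (extend_subst \<gamma>)"
  using vars_subt_at_subset[of "ps ! i" l] ps_in_poss
  by (simp add: extend_subst_nth subst_extend_subst subset_iff)

lemma sort_preserving_extend_subst:
  assumes "sort_preserving S vsort \<gamma>"
  shows "sort_preserving S vsort (extend_subst \<gamma>)"
  unfolding sort_preserving_def
proof
  fix x
  show "has_sort S vsort (extend_subst \<gamma> x) (vsort x)"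
  proof (cases "x \<in> set xs")
    case True
    then obtain i where "i < length ps" "x = xs ! i"
      using length_xs by (metis in_set_conv_nth)
    then show ?thesis
      using has_sort_xs assms by (simp add: extend_subst_nth has_sort_subst)
  next
    case False
    then show ?thesis
      using assms by (simp add: extend_subst_fresh sort_preserving_def)
  qed
qed

lemma subst_l'_extend_subst: "subst l' (extend_subst \<gamma>) = subst l \<gamma>"
proof -
  have "subst l' (extend_subst \<gamma>) = subst l (extend_subst \<gamma>)"
    by (rule subst_l') (rule extend_subst_solves_eqs)
  also have "\<dots> = subst l \<gamma>"
    by (rule subst_extend_subst) blast
  finally show ?thesis .
qed

lemma respects_rule_extend_subst:
  assumes sorted: "sort_preserving S vsort \<gamma>" and respects: "respects_rule S \<gamma> (l, r, \<phi>)"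
  shows "respects_rule S (extend_subst \<gamma>) (l', r, \<phi>')"
proof -
  have vals: "\<forall>x \<in> vars \<phi> \<union> (vars r - vars l). is_val S (\<gamma> x)"
    and \<phi>: "eval S (subst \<phi> \<gamma>) = true_val S"
    using respects by (simp_all add: respects_rule_iff)
  have vals': "\<forall>x \<in> vars \<phi>' \<union> (vars r - vars l'). is_val S (extend_subst \<gamma> x)"
  proof
    fix x assume x: "x \<in> vars \<phi>' \<union> (vars r - vars l')"
    show "is_val S (extend_subst \<gamma> x)"
    proof (cases "x \<in> set xs")
      case True
      then obtain i where "i < length ps" "x = xs ! i"
        using length_xs by (metis in_set_conv_nth)
      then show ?thesis
        using vals by (simp add: extend_subst_nth is_val_subst_subt_at_ps)
    next
      case False
      then have "x \<in> vars \<phi> \<union> (vars r - vars l)"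
        using x vars_\<phi>' set_ys vars_l_subset by auto
      then show ?thesis
        using False vals by (simp add: extend_subst_fresh)
    qed
  qed
  moreover have "eval S (subst \<phi>' (extend_subst \<gamma>)) = true_val S"
    using eval_subst_\<phi>'[OF sort_preserving_extend_subst[OF sorted]] vals' \<phi>
    by (simp add: subst_extend_subst extend_subst_solves_eqs)
  ultimately show ?thesis
    by (simp add: respects_rule_iff)
qed

lemma respects_rule_if_abstracted:
  assumes sorted: "sort_preserving S vsort \<gamma>" and respects: "respects_rule S \<gamma> (l', r, \<phi>')"
  shows "respects_rule S \<gamma> (l, r, \<phi>)" and "subst l' \<gamma> = subst l \<gamma>"
proof -
  have vals: "\<forall>x \<in> vars \<phi>' \<union> (vars r - vars l'). is_val S (\<gamma> x)"
    and \<phi>': "eval S (subst \<phi>' \<gamma>) = true_val S"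
    using respects by (simp_all add: respects_rule_iff)
  then have "eval S (subst \<phi> \<gamma>) = true_val S"
    and eqs: "\<forall>i < length ps. \<gamma> (xs ! i) = subst (subt_at l (ps ! i)) \<gamma>"
    using eval_subst_\<phi>'[OF sorted] by auto
  moreover have "\<forall>x \<in> vars \<phi> \<union> (vars r - vars l). is_val S (\<gamma> x)"
    using vals vars_\<phi>' set_ys by auto
  ultimately show "respects_rule S \<gamma> (l, r, \<phi>)"
    by (simp add: respects_rule_iff)
  show "subst l' \<gamma> = subst l \<gamma>"
    using eqs by (simp add: subst_l')
qed

theorem rstep_value_abstraction: "rstep S vsort (l, r, \<phi>) = rstep S vsort (l', r, \<phi>')"
proof (rule subset_antisym)
  show "rstep S vsort (l, r, \<phi>) \<subseteq> rstep S vsort (l', r, \<phi>')"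
  proof (rule rstep_subsetI)
    fix \<gamma> assume "sort_preserving S vsort \<gamma>" and "respects_rule S \<gamma> (l, r, \<phi>)"
    moreover have "subst r (extend_subst \<gamma>) = subst r \<gamma>"
      by (rule subst_extend_subst) blast
    ultimately show "\<exists>\<gamma>'. sort_preserving S vsort \<gamma>' \<and> respects_rule S \<gamma>' (l', r, \<phi>') \<and>
        subst l' \<gamma>' = subst l \<gamma> \<and> subst r \<gamma>' = subst r \<gamma>"
      by (intro exI[of _ "extend_subst \<gamma>"])
        (simp add: sort_preserving_extend_subst respects_rule_extend_subst subst_l'_extend_subst)
  qed
  show "rstep S vsort (l', r, \<phi>') \<subseteq> rstep S vsort (l, r, \<phi>)"
    by (rule rstep_subsetI) (metis respects_rule_if_abstracted)
qed

end


theorem theorem1: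
  fixes S :: "('f, 's, 'u) lctrs_sig" and vsort :: "'v \<Rightarrow> 's"
    and l r \<phi> :: "('f, 'v) trm" and ps :: "pos list" and xs ys :: "'v list"
  assumes "wf_lctrs S vsort"
    and "wf_rule S vsort (l, r, \<phi>)"
    and "distinct ps"
    and "set ps = {p \<in> poss l. is_val S (subt_at l p) \<or> (\<exists>x \<in> vars \<phi>. subt_at l p = Var x)}"
    and "length xs = length ps"
    and "distinct xs"
    and "set xs \<inter> (vars l \<union> vars r \<union> vars \<phi>) = {}"
    and "\<forall>i < length ps. has_sort S vsort (subt_at l (ps ! i)) (vsort (xs ! i))"
    and "distinct ys"
    and "set ys = vars r - (vars l \<union> vars \<phi>)"
  shows "rstep S vsort (l, r, \<phi>) =
         rstep S vsort (replace_vars l ps xs, r,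
           mk_and S \<phi>
             (mk_and S
               (conj_list S (map (\<lambda>i. mk_eq S (vsort (xs ! i)) (Var (xs ! i)) (subt_at l (ps ! i)))
                                 [0..<length ps]))
               (conj_list S (map (\<lambda>y. mk_eq S (vsort y) (Var y) (Var y)) ys))))"
proof -
  interpret value_abstraction S vsort l r \<phi> ps xs ys
    using assms(1-8,10) by unfold_locales (auto simp: wf_rule_def)
  show ?thesis
    using rstep_value_abstraction unfolding l'_def \<phi>'_def abstraction_eqs_def trivial_eqs_def .
qed

end
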